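(* Let $X$ be a random variable on $\{1,2,\dots\}$ with probability mass function $f(x)=\frac{x}{(x+1)!}$, $x=1,2,\dots$. Then $\mathbb E(X)=e-1$, $\mathbb E(X^2)=e+1$, $\mathrm{Var}(X)=e(3-e)$, and the moment generating function is \[\mathbb E(e^{tX})=e^{-t}\bigl(1-e^{e^t}+e^{t+e^t}\bigr)\quad\text{for all real } t.\] *)

theory Defs
  imports "HOL-Probability.Probability"
begin

end

theory Submission
  imports Defs
begin

text \<open>The mass \<open>p(n) = n/(n+1)!\<close> telescopes: \<open>p(n) = 1/n! - 1/(n+1)!\<close>. Hence
  \<open>n\<^bsup>k+1\<^esup> p(n) = n\<^bsup>k+1\<^esup>/n! - n\<^bsup>k\<^esup> p(n)\<close>, so the first two moments reduce to the
  exponential sums \<open>\<Sum> n/n! = e\<close> and \<open>\<Sum> n\<^sup>2/n! = 2e\<close>, and with \<open>z = e\<^sup>t\<close> the moment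
  generating function is \<open>\<Sum> z\<^sup>n/n! - z\<^sup>-\<^sup>1 \<Sum> z\<^bsup>n+1\<^esup>/(n+1)! = e\<^sup>z - (e\<^sup>z - 1)/z\<close>.\<close>

lemma nn_integral_nat_valued:
  fixes X :: "'a \<Rightarrow> nat" and g :: "nat \<Rightarrow> ennreal"
  assumes "X \<in> measurable M (count_space UNIV)"
  shows "(\<integral>\<^sup>+\<omega>. g (X \<omega>) \<partial>M) = (\<Sum>n. g n * emeasure M {\<omega> \<in> space M. X \<omega> = n})"
proof -
  have level_sets: "{\<omega> \<in> space M. X \<omega> = n} \<in> sets M" for n
    using assms by measurable
  have "g (X \<omega>) = (\<Sum>n. g n * indicator {\<omega> \<in> space M. X \<omega> = n} \<omega>)" if "\<omega> \<in> space M" for \<omega>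
    by (subst suminf_finite[where N="{X \<omega>}"]) (auto simp: that)
  then have "(\<integral>\<^sup>+\<omega>. g (X \<omega>) \<partial>M)
      = (\<integral>\<^sup>+\<omega>. (\<Sum>n. g n * indicator {\<omega> \<in> space M. X \<omega> = n} \<omega>) \<partial>M)"
    by (intro nn_integral_cong) simp
  also have "\<dots> = (\<Sum>n. \<integral>\<^sup>+\<omega>. g n * indicator {\<omega> \<in> space M. X \<omega> = n} \<omega> \<partial>M)"
    using level_sets by (intro nn_integral_suminf) auto
  also have "\<dots> = (\<Sum>n. g n * emeasure M {\<omega> \<in> space M. X \<omega> = n})"
    using level_sets by (simp add: nn_integral_cmult_indicator)
  finally show ?thesis .
qed

lemma
  fixes X :: "'a \<Rightarrow> nat" and g :: "nat \<Rightarrow> real"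
  assumes "finite_measure M" and X: "X \<in> measurable M (count_space UNIV)"
    and g_nonneg: "\<And>n. g n \<ge> 0"
    and sums: "(\<lambda>n. g n * measure M {\<omega> \<in> space M. X \<omega> = n}) sums S"
  shows integrable_nat_valued_sums: "integrable M (\<lambda>\<omega>. g (X \<omega>))"
    and integral_nat_valued_sums: "(\<integral>\<omega>. g (X \<omega>) \<partial>M) = S"
proof -
  interpret finite_measure M by (rule assms(1))
  have terms_nonneg: "g n * measure M {\<omega> \<in> space M. X \<omega> = n} \<ge> 0" for n
    using g_nonneg by simp
  have "(\<integral>\<^sup>+\<omega>. ennreal (g (X \<omega>)) \<partial>M)
      = (\<Sum>n. ennreal (g n) * emeasure M {\<omega> \<in> space M. X \<omega> = n})"
    by (rule nn_integral_nat_valued[OF X])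
  also have "\<dots> = (\<Sum>n. ennreal (g n * measure M {\<omega> \<in> space M. X \<omega> = n}))"
    by (simp add: emeasure_eq_measure ennreal_mult'' g_nonneg)
  also have "\<dots> = ennreal S"
    using suminf_ennreal2[OF terms_nonneg sums_summable[OF sums]] sums_unique[OF sums] by simp
  finally have nn_integral: "(\<integral>\<^sup>+\<omega>. ennreal (g (X \<omega>)) \<partial>M) = ennreal S" .
  have measurable: "(\<lambda>\<omega>. g (X \<omega>)) \<in> borel_measurable M"
    using X by measurable
  show "integrable M (\<lambda>\<omega>. g (X \<omega>))"
    using measurable g_nonneg nn_integral by (intro integrableI_nonneg) auto
  have "S \<ge> 0"
    using sums terms_nonneg by (intro sums_le[OF _ sums_zero sums]) simp
  then show "(\<integral>\<omega>. g (X \<omega>) \<partial>M) = S"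
    using integral_eq_nn_integral[OF measurable] nn_integral g_nonneg by simp
qed

lemma Suc_mult_divide_fact_Suc: "real (Suc n) * w / fact (Suc n) = w / (fact n :: real)"
  by (simp del: of_nat_Suc)

lemma exp_series_sums: "(\<lambda>n. z ^ n / fact n) sums exp (z :: real)"
  using exp_converges[of z] by (simp add: divide_inverse mult.commute)

lemma exp_series_Suc_sums: "(\<lambda>n. z ^ Suc n / fact (Suc n)) sums (exp (z :: real) - 1)"
  using exp_series_sums[of z] sums_Suc_iff[of "\<lambda>n. z ^ n / fact n"] by simp

lemma exp_series_first_moment_sums: "(\<lambda>n. real n * z ^ n / fact n) sums (z * exp (z :: real))"
proof -
  have "real (Suc n) * z ^ Suc n / fact (Suc n) = z * (z ^ n / fact n)" for n
    by (simp add: Suc_mult_divide_fact_Suc del: of_nat_Suc)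
  then show ?thesis
    using sums_mult[OF exp_series_sums, of z z] sums_Suc_iff[of "\<lambda>n. real n * z ^ n / fact n"]
    by simp
qed

lemma exp_series_second_moment_sums:
  "(\<lambda>n. real n ^ 2 * z ^ n / fact n) sums ((z ^ 2 + z) * exp (z :: real))"
proof -
  have "real (Suc n) ^ 2 * z ^ Suc n / fact (Suc n) = real (Suc n) * z ^ Suc n / fact n" for n
    using Suc_mult_divide_fact_Suc[of n "real (Suc n) * z ^ Suc n"]
    by (simp add: power2_eq_square mult.assoc)
  also have "real (Suc n) * z ^ Suc n / fact n = z * (real n * z ^ n / fact n + z ^ n / fact n)" for n
    by (simp add: add_divide_distrib algebra_simps)
  moreover have "(\<lambda>n. z * (real n * z ^ n / fact n + z ^ n / fact n)) sums ((z ^ 2 + z) * exp z)"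
    using sums_mult[OF sums_add[OF exp_series_first_moment_sums exp_series_sums], of z z]
    by (simp add: power2_eq_square algebra_simps)
  ultimately show ?thesis
    using sums_Suc_iff[of "\<lambda>n. real n ^ 2 * z ^ n / fact n"] by simp
qed

definition fact_mass :: "nat \<Rightarrow> real" where
  "fact_mass n = real n / fact (n + 1)"

lemma fact_mass_telescoping: "fact_mass n = 1 / fact n - 1 / fact (Suc n)"
proof -
  have "fact_mass n = (real (Suc n) * 1 - 1) / fact (Suc n)"
    by (simp add: fact_mass_def del: fact_Suc)
  also have "\<dots> = 1 / fact n - 1 / fact (Suc n)"
    by (simp only: diff_divide_distrib Suc_mult_divide_fact_Suc)
  finally show ?thesis .
qed

lemma fact_mass_moment_step:
  "real n ^ Suc k * fact_mass n = real n ^ Suc k / fact n - real n ^ k * fact_mass n"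
proof -
  have "real n ^ Suc k * fact_mass n = real n ^ k * (real n * (1 / fact n - 1 / fact (Suc n)))"
    by (simp only: fact_mass_telescoping power_Suc2 mult_ac)
  also have "\<dots> = real n ^ k * (real n / fact n - fact_mass n)"
    by (simp add: right_diff_distrib fact_mass_def del: fact_Suc)
  finally show ?thesis
    by (simp add: right_diff_distrib)
qed

lemma fact_mass_sums: "fact_mass sums 1"
  using sums_diff[OF exp_series_sums[of 1] exp_series_Suc_sums[of 1]]
  by (simp add: fact_mass_telescoping[abs_def] del: fact_Suc)

lemma fact_mass_first_moment_sums: "(\<lambda>n. real n * fact_mass n) sums (exp 1 - 1)"
  using sums_diff[OF exp_series_first_moment_sums[of 1] fact_mass_sums]
    fact_mass_moment_step[where k=0]
  by simp

lemma fact_mass_second_moment_sums: "(\<lambda>n. real n ^ 2 * fact_mass n) sums (exp 1 + 1)"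
proof -
  have "(\<lambda>n. real n ^ 2 / fact n - real n * fact_mass n) sums (2 * exp 1 - (exp 1 - 1))"
    using sums_diff[OF exp_series_second_moment_sums[of 1] fact_mass_first_moment_sums] by simp
  then show ?thesis
    using fact_mass_moment_step[where k=1] by (simp add: numeral_2_eq_2)
qed

lemma fact_mass_mgf_sums:
  "(\<lambda>n. exp (t * real n) * fact_mass n) sums (exp (- t) * (1 - exp (exp t) + exp (t + exp t)))"
proof -
  define z where "z = exp t"
  have "z \<noteq> 0"
    by (simp add: z_def)
  have "exp (t * real n) * fact_mass n = z ^ n / fact n - (1 / z) * (z ^ Suc n / fact (Suc n))" for n
  proof -
    have "exp (t * real n) = z ^ n"
      by (simp add: z_def exp_of_nat_mult[symmetric] mult.commute)
    then show ?thesis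
      using \<open>z \<noteq> 0\<close> by (simp add: fact_mass_telescoping right_diff_distrib del: fact_Suc)
  qed
  moreover have "(\<lambda>n. z ^ n / fact n - (1 / z) * (z ^ Suc n / fact (Suc n)))
      sums (exp z - (1 / z) * (exp z - 1))"
    by (intro sums_diff sums_mult exp_series_sums exp_series_Suc_sums)
  moreover have "exp z - (1 / z) * (exp z - 1) = exp (- t) * (1 - exp (exp t) + exp (t + exp t))"
    using \<open>z \<noteq> 0\<close> by (simp add: z_def exp_add exp_minus field_simps)
  ultimately show ?thesis
    by simp
qed

theorem mainTheorem3:
  fixes M :: "'a measure" and X :: "'a \<Rightarrow> nat"
  assumes "prob_space M"
    and "X \<in> measurable M (count_space UNIV)"
    and "\<And>\<omega>. \<omega> \<in> space M \<Longrightarrow> X \<omega> \<ge> 1"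
    and "\<And>x::nat. x \<ge> 1 \<Longrightarrow>
           measure M {\<omega> \<in> space M. X \<omega> = x} = real x / fact (x + 1)"
  shows "integrable M (\<lambda>\<omega>. real (X \<omega>))
     \<and> prob_space.expectation M (\<lambda>\<omega>. real (X \<omega>)) = exp 1 - 1
     \<and> integrable M (\<lambda>\<omega>. real (X \<omega>) ^ 2)
     \<and> prob_space.expectation M (\<lambda>\<omega>. real (X \<omega>) ^ 2) = exp 1 + 1
     \<and> prob_space.variance M (\<lambda>\<omega>. real (X \<omega>)) = exp 1 * (3 - exp 1)
     \<and> (\<forall>t::real. integrable M (\<lambda>\<omega>. exp (t * real (X \<omega>)))
          \<and> prob_space.expectation M (\<lambda>\<omega>. exp (t * real (X \<omega>)))
              = exp (- t) * (1 - exp (exp t) + exp (t + exp t)))"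
proof -
  interpret prob_space M by (rule assms(1))
  have distribution: "measure M {\<omega> \<in> space M. X \<omega> = n} = fact_mass n" for n
  proof (cases "n = 0")
    case True
    have no_zero: "{\<omega> \<in> space M. X \<omega> = 0} = {}"
      using assms(3) by fastforce
    show ?thesis
      unfolding True no_zero by (simp add: fact_mass_def)
  next
    case False
    then show ?thesis
      using assms(4)[of n] by (simp add: fact_mass_def)
  qed
  have moment: "integrable M (\<lambda>\<omega>. g (X \<omega>)) \<and> expectation (\<lambda>\<omega>. g (X \<omega>)) = S"
    if "\<And>n. g n \<ge> 0" and "(\<lambda>n. g n * fact_mass n) sums S" for g :: "nat \<Rightarrow> real" and S
    using integrable_nat_valued_sums[of M X g S] integral_nat_valued_sums[of M X g S]
      finite_measure_axioms assms(2) that by (simp add: distribution)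
  note mean = moment[OF _ fact_mass_first_moment_sums]
  note second_moment = moment[OF _ fact_mass_second_moment_sums]
  have "variance (\<lambda>\<omega>. real (X \<omega>)) = (exp 1 + 1) - (exp 1 - 1)\<^sup>2"
    using mean second_moment by (subst variance_eq) auto
  also have "\<dots> = exp 1 * (3 - exp 1)"
    by (simp add: power2_eq_square algebra_simps)
  finally show ?thesis
    using mean second_moment moment[OF _ fact_mass_mgf_sums] by auto
qed

end
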